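(* Consider linear regression with noise in the input in the limit $N\to\infty$ with $D$ fixed. Let $K:=A+B$, $U:=\mathbf{u}\mathbf{u}^{\mathrm T}$, $\mathbf{w}_*:=K^{-1}A\mathbf{u}$, and suppose the stationary distribution of the SGD parameter has mean $\mathbf{w}_*$ and covariance $\Sigma:=\mathbb{E}_{\mathbf{w}}[(\mathbf{w}-\mathbf{w}_* )(\mathbf{w}-\mathbf{w}_* )^{\mathrm T}]$. Then the averaged noise covariance is $$C=\mathbb{E}_{\mathbf{w}}[C(\mathbf{w})]=\frac1S\left(K\Sigma K+\mathrm{Tr}[K\Sigma]K+\mathrm{Tr}[AK^{-1}BU]K\right).$$
   Context: Training inputs $\tilde x_i=x_i+\eta_i$ with $x_i$ i.i.d. $\mathcal N(0,A)$ and $\eta_i$ i.i.d. $\mathcal N(0,B)$ independent of the $x_i$ ($A,B$ symmetric positive semidefinite with $A+B$ invertible); labels $y_i=\mathbf{u}^{\mathrm T}x_i$. Per-sample loss $\ell_i(\mathbf{w})=\frac12(\mathbf{w}^{\mathrm T}\tilde x_i-\mathbf{u}^{\mathrm T}x_i)^2$, $L=\frac1N\sum_i\ell_i$. Minibatch size $S$; noise covariance $C(\mathbf{w})=\frac{1}{SN}\sum_i\nabla\ell_i\nabla\ell_i^{\mathrm T}-\frac1S\nabla L\nabla L^{\mathrm T}$ taken in the limit $N\to\infty$; $\mathbb{E}_{\mathbf{w}}$ is over the stationary distribution of SGD. *)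

theory Defs
  imports "HOL-Analysis.Analysis" "HOL-Probability.Probability"
begin

definition outer :: "real^'n \<Rightarrow> real^'n \<Rightarrow> real^'n^'n" where
  "outer v w = (\<chi> i j. v $ i * w $ j)"

definition std_gauss :: "('n::finite \<Rightarrow> real) measure" where
  "std_gauss = PiM UNIV (\<lambda>_. density lborel std_normal_density)"

text \<open>mu is the centred Gaussian law N(0,A) on real^'n (possibly degenerate):
  the law of P z with z standard Gaussian and P P^T = A.\<close>
definition gaussian_law :: "(real^'n::finite) measure \<Rightarrow> real^'n^'n \<Rightarrow> bool" where
  "gaussian_law mu A \<longleftrightarrow>
     (\<exists>P. P ** transpose P = A \<and> mu = distr (std_gauss :: ('n \<Rightarrow> real) measure) borel (\<lambda>z. P *v (\<chi> i. z i)))"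

definition sample_loss :: "real^'n \<Rightarrow> real^'n \<Rightarrow> real^'n \<Rightarrow> real^'n \<Rightarrow> real" where
  "sample_loss u x eta w = (1/2) * (w \<bullet> (x + eta) - u \<bullet> x)\<^sup>2"

definition sample_grad :: "real^'n \<Rightarrow> real^'n \<Rightarrow> real^'n \<Rightarrow> real^'n \<Rightarrow> real^'n" where
  "sample_grad u x eta w = (w \<bullet> (x + eta) - u \<bullet> x) *\<^sub>R (x + eta)"

text \<open>SGD noise covariance C(w) in the limit N \<rightarrow> \<infinity>: the empirical averages over the
  training set are replaced by expectations over the data law D of (x, eta).\<close>
definition noise_cov :: "nat \<Rightarrow> ((real^'n) \<times> (real^'n)) measure \<Rightarrow> real^'n \<Rightarrow> real^'n \<Rightarrow> real^'n^'n" where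
  "noise_cov S D u w =
     (1 / real S) *\<^sub>R
       ((\<integral>p. outer (sample_grad u (fst p) (snd p) w) (sample_grad u (fst p) (snd p) w) \<partial>D)
        - outer (\<integral>p. sample_grad u (fst p) (snd p) w \<partial>D) (\<integral>p. sample_grad u (fst p) (snd p) w \<partial>D))"

end

theory Submission
  imports Defs
begin

text \<open>Write the data as \<open>x = P z\<^sub>1\<close>, \<open>\<eta> = Q z\<^sub>2\<close> with \<open>\<xi> = (z\<^sub>1, z\<^sub>2)\<close> standard Gaussian
  in twice the dimension. The per-sample gradient is then \<open>(c \<bullet> \<xi>) [P Q] \<xi>\<close> with
  \<open>c = (P\<^sup>T (w - u), Q\<^sup>T w)\<close>, a linear form times a linear vector in \<open>\<xi>\<close>, and Isserlis'
  theorem gives its mean \<open>m = A (w - u) + B w\<close> and its second moment \<open>|c|\<^sup>2 K + 2 m m\<^sup>T\<close>, where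
  \<open>|c|\<^sup>2 = (w - u)\<^sup>T A (w - u) + w\<^sup>T B w\<close>. Completing the square around \<open>w\<^sub>* = K\<^sup>-\<^sup>1 A u\<close>
  gives \<open>m = K (w - w\<^sub>*)\<close> and \<open>|c|\<^sup>2 = (w - w\<^sub>*)\<^sup>T K (w - w\<^sub>*) + Tr[A K\<^sup>-\<^sup>1 B U]\<close>. Hence
  \<open>C(w)\<close> is an affine function of \<open>(w - w\<^sub>*)(w - w\<^sub>*)\<^sup>T\<close>, and averaging over the stationary
  law replaces that matrix by \<open>\<Sigma>\<close>.\<close>

section \<open>Moments of standard Gaussian vectors\<close>

definition normal_moment :: "nat \<Rightarrow> real" where
  "normal_moment k = (\<integral>x. x ^ k \<partial>std_normal_distribution)"

text \<open>Stated with \<open>Suc\<close> rather than numerals because that is the form in which the simplifier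
  leaves multiplicities computed as sums of \<open>of_bool\<close>.\<close>

lemma normal_moment_upto_4 [simp]:
  "normal_moment 0 = 1" "normal_moment (Suc 0) = 0" "normal_moment (Suc (Suc 0)) = 1"
  "normal_moment (Suc (Suc (Suc 0))) = 0" "normal_moment (Suc (Suc (Suc (Suc 0)))) = 3"
proof -
  show "normal_moment 0 = 1" "normal_moment (Suc (Suc 0)) = 1"
    "normal_moment (Suc (Suc (Suc (Suc 0)))) = 3"
    using std_normal_distribution_even_moments(1)[of 0]
      std_normal_distribution_even_moments(1)[of 1] std_normal_distribution_even_moments(1)[of 2]
    by (simp_all add: normal_moment_def fact_numeral numeral_eq_Suc)
  show "normal_moment (Suc 0) = 0" "normal_moment (Suc (Suc (Suc 0))) = 0"
    using integral_std_normal_distribution_moment_odd[of 1]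
      integral_std_normal_distribution_moment_odd[of 3]
    by (simp_all add: normal_moment_def numeral_3_eq_3)
qed

lemma prob_space_std_gauss: "prob_space std_gauss"
  unfolding std_gauss_def by (intro prob_space_PiM prob_space_normal_density) simp

lemma
  fixes m :: "'a::finite \<Rightarrow> nat"
  shows integrable_std_gauss_monomial:
      "integrable std_gauss (\<lambda>z. \<Prod>i\<in>UNIV. z i ^ m i)"
    and integral_std_gauss_monomial:
      "(\<integral>z. (\<Prod>i\<in>UNIV. z i ^ m i) \<partial>std_gauss) = (\<Prod>i\<in>UNIV. normal_moment (m i))"
proof -
  interpret product_prob_space "\<lambda>_::'a. std_normal_distribution" UNIV
    by (intro product_prob_spaceI prob_space_normal_density) simp
  show "integrable std_gauss (\<lambda>z. \<Prod>i\<in>UNIV. z i ^ m i)"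
    unfolding std_gauss_def
    by (rule product_integrable_prod) (auto intro: integrable_std_normal_distribution_moment)
  show "(\<integral>z. (\<Prod>i\<in>UNIV. z i ^ m i) \<partial>std_gauss) = (\<Prod>i\<in>UNIV. normal_moment (m i))"
    unfolding std_gauss_def normal_moment_def
    by (rule product_integral_prod) (auto intro: integrable_std_normal_distribution_moment)
qed

lemma
  fixes f :: "'a \<Rightarrow> real" and g :: "'b \<Rightarrow> real"
  assumes "sigma_finite_measure M1" "sigma_finite_measure M2"
    and f: "integrable M1 f" and g: "integrable M2 g"
  shows integrable_pair_measure_mult: "integrable (M1 \<Otimes>\<^sub>M M2) (\<lambda>p. f (fst p) * g (snd p))"
    and integral_pair_measure_mult:
      "(\<integral>p. f (fst p) * g (snd p) \<partial>(M1 \<Otimes>\<^sub>M M2)) = integral\<^sup>L M1 f * integral\<^sup>L M2 g"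
proof -
  interpret pair_sigma_finite M1 M2
    using assms(1,2) by (simp add: pair_sigma_finite_def)
  show int: "integrable (M1 \<Otimes>\<^sub>M M2) (\<lambda>p. f (fst p) * g (snd p))"
  proof (rule Fubini_integrable)
    show "(\<lambda>p. f (fst p) * g (snd p)) \<in> borel_measurable (M1 \<Otimes>\<^sub>M M2)"
      using f g by measurable
    have "integrable M1 (\<lambda>x. norm (f x) * (\<integral>y. norm (g y) \<partial>M2))"
      using f by (intro integrable_mult_left integrable_norm)
    then show "integrable M1 (\<lambda>x. \<integral>y. norm (f (fst (x, y)) * g (snd (x, y))) \<partial>M2)"
      by (simp add: abs_mult)
  qed (use g in simp)
  show "(\<integral>p. f (fst p) * g (snd p) \<partial>(M1 \<Otimes>\<^sub>M M2)) = integral\<^sup>L M1 f * integral\<^sup>L M2 g"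
    using integral_fst'[OF int] by simp
qed

lemma prod_power_of_bool_eq:
  "(\<Prod>j\<in>UNIV. x j ^ of_bool (j = p)) = (x (p::'a::finite) :: 'b::comm_monoid_mult)"
  by (simp add: of_bool_def if_distrib prod.delta cong: if_cong)

lemma normal_moment_prod_pair:
  "(\<Prod>j\<in>UNIV. normal_moment (of_bool (j = p) + of_bool (j = q))) = of_bool (p = (q::'a::finite))"
proof -
  have "(\<Prod>j\<in>UNIV. normal_moment (of_bool (j = p) + of_bool (j = q))) =
        (\<Prod>j\<in>{p, q}. normal_moment (of_bool (j = p) + of_bool (j = q)))"
    by (rule prod.mono_neutral_right) auto
  then show ?thesis
    by (cases "p = q") simp_all
qed

lemma normal_moment_prod_quadruple:
  fixes p q r s :: "'a::finite"
  shows "(\<Prod>j\<in>UNIV. normal_moment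
             (of_bool (j = p) + of_bool (j = q) + of_bool (j = r) + of_bool (j = s)))
     = of_bool (p = q) * of_bool (r = s) + of_bool (p = r) * of_bool (q = s)
       + of_bool (p = s) * of_bool (q = r)"
proof -
  let ?m = "\<lambda>j. of_bool (j = p) + of_bool (j = q) + of_bool (j = r) + of_bool (j = s)"
  have "(\<Prod>j\<in>UNIV. normal_moment (?m j)) = (\<Prod>j\<in>{p, q, r, s}. normal_moment (?m j))"
    by (rule prod.mono_neutral_right) auto
  then show ?thesis
    by (cases "p = q"; cases "p = r"; cases "p = s"; cases "q = r"; cases "q = s"; cases "r = s")
       (simp_all add: insert_commute)
qed

lemma sum_UNIV_sum_type:
  fixes g :: "'a::finite + 'b::finite \<Rightarrow> 'c::comm_monoid_add"
  shows "(\<Sum>j\<in>UNIV. g j) = (\<Sum>i\<in>UNIV. g (Inl i)) + (\<Sum>i\<in>UNIV. g (Inr i))"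
  using sum.Plus[of "UNIV :: 'a set" "UNIV :: 'b set" g] by simp

lemma prod_UNIV_sum_type:
  fixes g :: "'a::finite + 'b::finite \<Rightarrow> 'c::comm_monoid_mult"
  shows "(\<Prod>j\<in>UNIV. g j) = (\<Prod>i\<in>UNIV. g (Inl i)) * (\<Prod>i\<in>UNIV. g (Inr i))"
  using prod.Plus[of "UNIV :: 'a set" "UNIV :: 'b set" g] by simp

lemma
  fixes m :: "'a::finite + 'b::finite \<Rightarrow> nat"
  shows integrable_std_gauss_pair_monomial:
      "integrable (std_gauss \<Otimes>\<^sub>M std_gauss) (\<lambda>z. \<Prod>j\<in>UNIV. case_sum (fst z) (snd z) j ^ m j)"
    and integral_std_gauss_pair_monomial:
      "(\<integral>z. (\<Prod>j\<in>UNIV. case_sum (fst z) (snd z) j ^ m j) \<partial>(std_gauss \<Otimes>\<^sub>M std_gauss))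
         = (\<Prod>j\<in>UNIV. normal_moment (m j))"
proof -
  have split: "(\<Prod>j\<in>UNIV. case_sum (fst z) (snd z) j ^ m j)
      = (\<Prod>i\<in>UNIV. fst z i ^ m (Inl i)) * (\<Prod>i\<in>UNIV. snd z i ^ m (Inr i))" for z
    by (simp add: prod_UNIV_sum_type)
  note factors = prob_space_imp_sigma_finite[OF prob_space_std_gauss]
    prob_space_imp_sigma_finite[OF prob_space_std_gauss]
    integrable_std_gauss_monomial integrable_std_gauss_monomial
  show "integrable (std_gauss \<Otimes>\<^sub>M std_gauss) (\<lambda>z. \<Prod>j\<in>UNIV. case_sum (fst z) (snd z) j ^ m j)"
    unfolding split by (rule integrable_pair_measure_mult[OF factors])
  show "(\<integral>z. (\<Prod>j\<in>UNIV. case_sum (fst z) (snd z) j ^ m j) \<partial>(std_gauss \<Otimes>\<^sub>M std_gauss))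
         = (\<Prod>j\<in>UNIV. normal_moment (m j))"
    unfolding split integral_pair_measure_mult[OF factors] integral_std_gauss_monomial
    by (simp add: prod_UNIV_sum_type)
qed

text \<open>Isserlis' theorem at orders 2 and 4 for the coordinates of \<open>\<xi>\<close>: this is all that the
  computation of the gradient moments uses about the data distribution.\<close>

definition gaussian_moments_upto_4 :: "'x measure \<Rightarrow> ('x \<Rightarrow> real^'j) \<Rightarrow> bool" where
  "gaussian_moments_upto_4 M \<xi> \<longleftrightarrow>
     (\<forall>p q. integrable M (\<lambda>x. \<xi> x $ p * \<xi> x $ q) \<and>
        (\<integral>x. \<xi> x $ p * \<xi> x $ q \<partial>M) = of_bool (p = q)) \<and>
     (\<forall>p q r s. integrable M (\<lambda>x. \<xi> x $ p * \<xi> x $ q * \<xi> x $ r * \<xi> x $ s) \<and>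
        (\<integral>x. \<xi> x $ p * \<xi> x $ q * \<xi> x $ r * \<xi> x $ s \<partial>M) =
          of_bool (p = q) * of_bool (r = s) + of_bool (p = r) * of_bool (q = s)
          + of_bool (p = s) * of_bool (q = r))"

definition pastecart :: "'a^'m \<Rightarrow> 'a^'n \<Rightarrow> 'a^('m + 'n)" where
  "pastecart x y = (\<chi> j. case_sum (vec_nth x) (vec_nth y) j)"

lemma pastecart_nth [simp]: "pastecart x y $ j = case_sum (vec_nth x) (vec_nth y) j"
  by (simp add: pastecart_def)

lemma gaussian_moments_upto_4_std_gauss_pair:
  "gaussian_moments_upto_4 (std_gauss \<Otimes>\<^sub>M std_gauss)
     (\<lambda>z::('a::finite \<Rightarrow> real) \<times> ('b::finite \<Rightarrow> real). pastecart (\<chi> i. fst z i) (\<chi> i. snd z i))"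
proof -
  define x where "x z = case_sum (fst z) (snd z)" for z :: "('a \<Rightarrow> real) \<times> ('b \<Rightarrow> real)"
  have coord: "pastecart (\<chi> i. fst z i) (\<chi> i. snd z i) $ j = x z j" for z j
    by (cases j) (simp_all add: x_def)
  have "x z p * x z q = (\<Prod>j\<in>UNIV. x z j ^ (of_bool (j = p) + of_bool (j = q)))" for z p q
    by (simp only: power_add prod.distrib prod_power_of_bool_eq)
  moreover have "x z p * x z q * x z r * x z s = (\<Prod>j\<in>UNIV. x z j ^
      (of_bool (j = p) + of_bool (j = q) + of_bool (j = r) + of_bool (j = s)))" for z p q r s
    by (simp only: power_add prod.distrib prod_power_of_bool_eq)
  ultimately show ?thesis
    unfolding gaussian_moments_upto_4_def coord x_def
    by (simp only: integrable_std_gauss_pair_monomial integral_std_gauss_pair_monomial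
        normal_moment_prod_pair normal_moment_prod_quadruple simp_thms)
qed

section \<open>Moments of a linear form times a linear vector\<close>

lemma bounded_bilinear_outer: "bounded_bilinear outer"
proof -
  have "bilinear outer"
    unfolding bilinear_def by (auto intro!: linearI simp: outer_def vec_eq_iff algebra_simps)
  then show ?thesis
    by (simp add: bilinear_conv_bounded_bilinear)
qed

interpretation outer: bounded_bilinear outer
  by (rule bounded_bilinear_outer)

lemma matrix_vector_mult_columns: "C *v x = (\<Sum>j\<in>UNIV. x $ j *\<^sub>R column j C)"
  for C :: "real^'j::finite^'m"
  by (simp add: matrix_mult_sum scalar_mult_eq_scaleR)

lemma matrix_mult_transpose_columns:
  "C ** transpose C = (\<Sum>j\<in>UNIV. outer (column j C) (column j C))"
  for C :: "real^'j::finite^'m::finite"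
  by (simp add: vec_eq_iff matrix_matrix_mult_def column_def outer_def transpose_def sum_component)

lemma
  fixes c :: "real^'j::finite"
  assumes "gaussian_moments_upto_4 M \<xi>"
  shows integrable_inner_times_coord: "integrable M (\<lambda>x. (c \<bullet> \<xi> x) * \<xi> x $ j)"
    and integral_inner_times_coord: "(\<integral>x. (c \<bullet> \<xi> x) * \<xi> x $ j \<partial>M) = c $ j"
proof -
  have int: "integrable M (\<lambda>x. \<xi> x $ p * \<xi> x $ q)"
    and mom: "(\<integral>x. \<xi> x $ p * \<xi> x $ q \<partial>M) = of_bool (p = q)" for p q
    using assms unfolding gaussian_moments_upto_4_def by auto
  have expand: "(c \<bullet> \<xi> x) * \<xi> x $ j = (\<Sum>l\<in>UNIV. c $ l * (\<xi> x $ l * \<xi> x $ j))" for x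
    unfolding inner_vec_def sum_distrib_right by (simp add: mult_ac)
  show "integrable M (\<lambda>x. (c \<bullet> \<xi> x) * \<xi> x $ j)"
    unfolding expand by (intro Bochner_Integration.integrable_sum integrable_mult_right int)
  show "(\<integral>x. (c \<bullet> \<xi> x) * \<xi> x $ j \<partial>M) = c $ j"
    unfolding expand by (simp add: int mom)
qed

lemma sum_sum_mult_of_bool:
  fixes f g :: "'a::finite \<Rightarrow> 'b::comm_semiring_1"
  shows "(\<Sum>l\<in>UNIV. \<Sum>m\<in>UNIV. (f l * g m) * (of_bool (l = j) * of_bool (m = k))) = f j * g k"
proof -
  have "(\<Sum>l\<in>UNIV. \<Sum>m\<in>UNIV. (f l * g m) * (of_bool (l = j) * of_bool (m = k)))
      = (\<Sum>l\<in>UNIV. f l * of_bool (l = j)) * (\<Sum>m\<in>UNIV. g m * of_bool (m = k))"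
    unfolding sum_product by (simp add: mult_ac)
  then show ?thesis by simp
qed

lemma
  fixes c :: "real^'j::finite"
  assumes "gaussian_moments_upto_4 M \<xi>"
  shows integrable_inner_square_times_coords:
      "integrable M (\<lambda>x. (c \<bullet> \<xi> x)\<^sup>2 * (\<xi> x $ j * \<xi> x $ k))"
    and integral_inner_square_times_coords:
      "(\<integral>x. (c \<bullet> \<xi> x)\<^sup>2 * (\<xi> x $ j * \<xi> x $ k) \<partial>M)
         = (c \<bullet> c) * of_bool (j = k) + 2 * (c $ j * c $ k)"
proof -
  have int: "integrable M (\<lambda>x. \<xi> x $ p * \<xi> x $ q * \<xi> x $ r * \<xi> x $ s)"
    and mom: "(\<integral>x. \<xi> x $ p * \<xi> x $ q * \<xi> x $ r * \<xi> x $ s \<partial>M) =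
      of_bool (p = q) * of_bool (r = s) + of_bool (p = r) * of_bool (q = s)
      + of_bool (p = s) * of_bool (q = r)" for p q r s
    using assms unfolding gaussian_moments_upto_4_def by auto
  have expand: "(c \<bullet> \<xi> x)\<^sup>2 * (\<xi> x $ j * \<xi> x $ k) = (\<Sum>l\<in>UNIV. \<Sum>m\<in>UNIV.
      (c $ l * c $ m) * (\<xi> x $ l * \<xi> x $ m * \<xi> x $ j * \<xi> x $ k))" for x
    unfolding power2_eq_square inner_vec_def sum_product unfolding sum_distrib_right
    by (simp add: mult_ac)
  show "integrable M (\<lambda>x. (c \<bullet> \<xi> x)\<^sup>2 * (\<xi> x $ j * \<xi> x $ k))"
    unfolding expand by (intro Bochner_Integration.integrable_sum integrable_mult_right int)
  have "(\<integral>x. (c \<bullet> \<xi> x)\<^sup>2 * (\<xi> x $ j * \<xi> x $ k) \<partial>M) = (\<Sum>l\<in>UNIV. \<Sum>m\<in>UNIV.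
      (c $ l * c $ m) * (of_bool (l = m) * of_bool (j = k) + of_bool (l = j) * of_bool (m = k)
        + of_bool (l = k) * of_bool (m = j)))"
    unfolding expand by (simp add: int mom)
  also have "\<dots> = (c \<bullet> c) * of_bool (j = k) + 2 * (c $ j * c $ k)"
  proof -
    have "(\<Sum>l\<in>UNIV. \<Sum>m\<in>UNIV. (c $ l * c $ m) * (of_bool (l = m) * of_bool (j = k)))
        = (c \<bullet> c) * of_bool (j = k)"
      by (cases "j = k")
        (simp_all add: inner_vec_def of_bool_def if_distrib if_distribR cong: if_cong)
    moreover have "(\<Sum>l\<in>UNIV. \<Sum>m\<in>UNIV. (c $ l * c $ m) * (of_bool (l = j) * of_bool (m = k)))
        = c $ j * c $ k"
      by (rule sum_sum_mult_of_bool)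
    moreover have "(\<Sum>l\<in>UNIV. \<Sum>m\<in>UNIV. (c $ l * c $ m) * (of_bool (l = k) * of_bool (m = j)))
        = c $ j * c $ k"
      by (simp add: sum_sum_mult_of_bool mult.commute)
    ultimately show ?thesis
      by (simp only: distrib_left sum.distrib)
  qed
  finally show "(\<integral>x. (c \<bullet> \<xi> x)\<^sup>2 * (\<xi> x $ j * \<xi> x $ k) \<partial>M) =
      (c \<bullet> c) * of_bool (j = k) + 2 * (c $ j * c $ k)" .
qed

lemma sum_of_bool_scaleR:
  "(\<Sum>k\<in>UNIV. (a * of_bool (j = k)) *\<^sub>R f k) = a *\<^sub>R (f (j::'a::finite) :: 'b::real_vector)"
proof -
  have "(\<Sum>k\<in>UNIV. (a * of_bool (j = k)) *\<^sub>R f k) = (\<Sum>k\<in>UNIV. if j = k then a *\<^sub>R f k else 0)"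
    by (rule sum.cong) auto
  then show ?thesis by simp
qed

lemma integral_inner_scaleR_linear:
  fixes C :: "real^'j::finite^'m::finite" and c :: "real^'j"
  assumes "gaussian_moments_upto_4 M \<xi>"
  shows "(\<integral>x. (c \<bullet> \<xi> x) *\<^sub>R (C *v \<xi> x) \<partial>M) = C *v c"
proof -
  have expand: "(c \<bullet> \<xi> x) *\<^sub>R (C *v \<xi> x) = (\<Sum>j\<in>UNIV. ((c \<bullet> \<xi> x) * \<xi> x $ j) *\<^sub>R column j C)" for x
    by (simp add: matrix_vector_mult_columns scaleR_sum_right)
  show ?thesis
    unfolding expand
    by (simp add: integrable_inner_times_coord[OF assms] integral_inner_times_coord[OF assms]
        matrix_vector_mult_columns)
qed

lemma integral_outer_inner_scaleR_linear:
  fixes C :: "real^'j::finite^'m::finite" and c :: "real^'j"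
  assumes "gaussian_moments_upto_4 M \<xi>"
  defines "g \<equiv> \<lambda>x. (c \<bullet> \<xi> x) *\<^sub>R (C *v \<xi> x)"
  shows "(\<integral>x. outer (g x) (g x) \<partial>M)
    = (c \<bullet> c) *\<^sub>R (C ** transpose C) + 2 *\<^sub>R outer (C *v c) (C *v c)"
proof -
  define E where "E j k = outer (column j C) (column k C)" for j k
  have outer_columns: "outer (C *v v) (C *v v) = (\<Sum>j\<in>UNIV. \<Sum>k\<in>UNIV. (v $ j * v $ k) *\<^sub>R E j k)"
    for v :: "real^'j"
    by (subst sum.swap) (simp add: mult.commute E_def matrix_vector_mult_columns outer.sum_left
        outer.sum_right outer.scaleR_left outer.scaleR_right scaleR_sum_right)
  have expand: "outer (g x) (g x) =
      (\<Sum>j\<in>UNIV. \<Sum>k\<in>UNIV. ((c \<bullet> \<xi> x)\<^sup>2 * (\<xi> x $ j * \<xi> x $ k)) *\<^sub>R E j k)" for x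
    by (simp add: g_def outer.scaleR_left outer.scaleR_right outer_columns scaleR_sum_right
        power2_eq_square mult.assoc)
  have "(\<integral>x. outer (g x) (g x) \<partial>M) =
      (\<Sum>j\<in>UNIV. \<Sum>k\<in>UNIV. ((c \<bullet> c) * of_bool (j = k) + 2 * (c $ j * c $ k)) *\<^sub>R E j k)"
    unfolding expand
    by (simp add: integrable_inner_square_times_coords[OF assms(1)]
        integral_inner_square_times_coords[OF assms(1)])
  also have "\<dots> = (c \<bullet> c) *\<^sub>R (\<Sum>j\<in>UNIV. E j j) + 2 *\<^sub>R outer (C *v c) (C *v c)"
    by (simp add: outer_columns scaleR_add_left sum.distrib sum_of_bool_scaleR scaleR_sum_right)
  finally show "(\<integral>x. outer (g x) (g x) \<partial>M) =
      (c \<bullet> c) *\<^sub>R (C ** transpose C) + 2 *\<^sub>R outer (C *v c) (C *v c)"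
    by (simp add: E_def matrix_mult_transpose_columns)
qed

section \<open>The noise covariance for Gaussian data\<close>

definition hstack :: "'a^'j^'m \<Rightarrow> 'a^'k^'m \<Rightarrow> 'a^('j + 'k)^'m" where
  "hstack P Q = (\<chi> i. pastecart (P $ i) (Q $ i))"

lemma inner_pastecart: "pastecart a b \<bullet> pastecart x y = a \<bullet> x + b \<bullet> y"
  for a x :: "real^'j::finite" and b y :: "real^'k::finite"
  by (simp add: inner_vec_def sum_UNIV_sum_type)

lemma hstack_mult_pastecart: "hstack P Q *v pastecart x y = P *v x + Q *v y"
  for P :: "real^'j::finite^'m" and Q :: "real^'k::finite^'m"
  by (simp add: vec_eq_iff hstack_def matrix_vector_mult_def sum_UNIV_sum_type)

lemma hstack_mult_transpose:
  "hstack P Q ** transpose (hstack P Q) = P ** transpose P + Q ** transpose Q"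
  for P :: "real^'j::finite^'m::finite" and Q :: "real^'k::finite^'m"
  by (simp add: vec_eq_iff hstack_def matrix_matrix_mult_def transpose_def sum_UNIV_sum_type)

lemma borel_measurable_outer [measurable]:
  assumes "f \<in> borel_measurable M" "g \<in> borel_measurable M"
  shows "(\<lambda>x. outer (f x) (g x)) \<in> borel_measurable M"
proof -
  have "continuous_on UNIV (\<lambda>p. outer (fst p) (snd p :: real^'n))"
    unfolding outer_def by (intro continuous_intros)
  then show ?thesis
    using assms by (rule borel_measurable_continuous_Pair[rotated 2])
qed

lemma borel_measurable_matrix_vector_mult_std_gauss:
  "(\<lambda>z. P *v vec_lambda z) \<in> borel_measurable (std_gauss :: ('j::finite \<Rightarrow> real) measure)"
  for P :: "real^'j^'m::finite"
  unfolding matrix_vector_mult_columns std_gauss_def vec_lambda_beta by measurable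

lemma integral_pair_gaussian_law:
  fixes P Q :: "real^'n::finite^'n"
    and f :: "(real^'n) \<times> (real^'n) \<Rightarrow> 'b::{banach, second_countable_topology}"
  assumes Dx: "Dx = distr std_gauss borel (\<lambda>z. P *v vec_lambda z)"
    and De: "De = distr std_gauss borel (\<lambda>z. Q *v vec_lambda z)"
    and f: "f \<in> borel_measurable (borel \<Otimes>\<^sub>M borel)"
  shows "(\<integral>p. f p \<partial>(Dx \<Otimes>\<^sub>M De)) =
    (\<integral>z. f (P *v vec_lambda (fst z), Q *v vec_lambda (snd z)) \<partial>(std_gauss \<Otimes>\<^sub>M std_gauss))"
proof -
  note measurable = borel_measurable_matrix_vector_mult_std_gauss
  have "sigma_finite_measure De"
    unfolding De by (intro prob_space_imp_sigma_finite prob_space.prob_space_distr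
        prob_space_std_gauss measurable)
  then have "Dx \<Otimes>\<^sub>M De = distr (std_gauss \<Otimes>\<^sub>M std_gauss) (borel \<Otimes>\<^sub>M borel)
      (\<lambda>z. (P *v vec_lambda (fst z), Q *v vec_lambda (snd z)))"
    unfolding Dx using pair_measure_distr[OF measurable measurable] De
    by (simp add: case_prod_beta')
  moreover have "(\<lambda>z. (P *v vec_lambda (fst z), Q *v vec_lambda (snd z)))
      \<in> measurable (std_gauss \<Otimes>\<^sub>M std_gauss) (borel \<Otimes>\<^sub>M borel)"
    using measurable[of P] measurable[of Q] by measurable
  ultimately show ?thesis
    using f by (simp add: integral_distr)
qed

lemma noise_cov_gaussian:
  fixes A B :: "real^'n::finite^'n" and Dx Deta :: "(real^'n) measure"
  assumes "gaussian_law Dx A" and "gaussian_law Deta B"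
  shows "noise_cov S (Dx \<Otimes>\<^sub>M Deta) u w = (1 / real S) *\<^sub>R
    (((w - u) \<bullet> (A *v (w - u)) + w \<bullet> (B *v w)) *\<^sub>R (A + B)
      + outer (A *v (w - u) + B *v w) (A *v (w - u) + B *v w))"
proof -
  obtain P :: "real^'n^'n"
    where A: "P ** transpose P = A" and Dx: "Dx = distr std_gauss borel (\<lambda>z. P *v vec_lambda z)"
    using assms(1) unfolding gaussian_law_def by blast
  obtain Q :: "real^'n^'n"
    where B: "Q ** transpose Q = B" and De: "Deta = distr std_gauss borel (\<lambda>z. Q *v vec_lambda z)"
    using assms(2) unfolding gaussian_law_def by blast
  txt \<open>\<open>x + \<eta> = C \<xi>\<close> and \<open>w \<bullet> (x + \<eta>) - u \<bullet> x = c \<bullet> \<xi>\<close> for the following \<open>\<xi>\<close>, \<open>C\<close>, \<open>c\<close>.\<close>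
  define \<xi> where "\<xi> z = pastecart (vec_lambda (fst z)) (vec_lambda (snd z))"
    for z :: "('n \<Rightarrow> real) \<times> ('n \<Rightarrow> real)"
  define C where "C = hstack P Q"
  define c where "c = pastecart (transpose P *v (w - u)) (transpose Q *v w)"
  define g where "g p = sample_grad u (fst p) (snd p) w" for p
  have \<xi>: "gaussian_moments_upto_4 (std_gauss \<Otimes>\<^sub>M std_gauss) \<xi>"
    unfolding \<xi>_def by (rule gaussian_moments_upto_4_std_gauss_pair)
  have g_gauss:
    "g (P *v vec_lambda (fst z), Q *v vec_lambda (snd z)) = (c \<bullet> \<xi> z) *\<^sub>R (C *v \<xi> z)" for z
    by (simp add: g_def sample_grad_def c_def \<xi>_def C_def inner_pastecart hstack_mult_pastecart
        dot_lmul_matrix inner_diff_left inner_add_right)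
  have g_meas: "g \<in> borel_measurable (borel \<Otimes>\<^sub>M borel)"
    unfolding g_def sample_grad_def by measurable
  then have gg_meas: "(\<lambda>p. outer (g p) (g p)) \<in> borel_measurable (borel \<Otimes>\<^sub>M borel)"
    by measurable
  have Cc: "C *v c = A *v (w - u) + B *v w"
    by (simp add: C_def c_def A[symmetric] B[symmetric] hstack_mult_pastecart
        matrix_vector_mul_assoc[symmetric] del: transpose_matrix_vector)
  have cc: "c \<bullet> c = (w - u) \<bullet> (A *v (w - u)) + w \<bullet> (B *v w)"
    by (simp add: c_def A[symmetric] B[symmetric] inner_pastecart dot_lmul_matrix
        matrix_vector_mul_assoc[symmetric])
  have CC: "C ** transpose C = A + B"
    by (simp add: C_def A B hstack_mult_transpose)
  have mean: "(\<integral>p. g p \<partial>(Dx \<Otimes>\<^sub>M Deta)) = A *v (w - u) + B *v w"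
    using integral_inner_scaleR_linear[OF \<xi>, of c C]
    by (simp add: integral_pair_gaussian_law[OF Dx De g_meas] g_gauss Cc)
  have second_moment: "(\<integral>p. outer (g p) (g p) \<partial>(Dx \<Otimes>\<^sub>M Deta)) =
      ((w - u) \<bullet> (A *v (w - u)) + w \<bullet> (B *v w)) *\<^sub>R (A + B)
      + 2 *\<^sub>R outer (A *v (w - u) + B *v w) (A *v (w - u) + B *v w)"
    using integral_outer_inner_scaleR_linear[OF \<xi>, of c C]
    by (simp add: integral_pair_gaussian_law[OF Dx De gg_meas] g_gauss Cc cc CC)
  show ?thesis
    unfolding noise_cov_def g_def[symmetric] mean second_moment
    by (simp add: scaleR_2 algebra_simps)
qed

section \<open>Completing the square\<close>

lemma
  fixes A :: "'a::semiring_1^'n^'m"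
  assumes "invertible A"
  shows matrix_mul_matrix_inv: "A ** matrix_inv A = mat 1"
    and matrix_inv_mul_matrix: "matrix_inv A ** A = mat 1"
  using someI_ex[OF assms[unfolded invertible_def]] unfolding matrix_inv_def by auto

lemma inner_matrix_vector_symmetric:
  fixes M :: "real^'n^'n"
  assumes "transpose M = M"
  shows "x \<bullet> (M *v y) = y \<bullet> (M *v x)"
  by (metis assms dot_lmul_matrix inner_commute transpose_matrix_vector)

lemma outer_matrix_vector_mult: "outer (M *v a) (M *v b) = M ** outer a b ** transpose M"
  for M :: "real^'n^'n"
  by (simp add: vec_eq_iff outer_def matrix_matrix_mult_def matrix_vector_mult_def transpose_def
      sum_distrib_left sum_distrib_right mult_ac)

lemma trace_mult_outer: "trace (M ** outer a b) = b \<bullet> (M *v a)"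
  for M :: "real^'n^'n"
  by (simp add: trace_def matrix_matrix_mult_def outer_def inner_vec_def matrix_vector_mult_def
      sum_distrib_left mult_ac)

lemma
  fixes A B :: "real^'n::finite^'n"
  assumes symA: "transpose A = A" and symB: "transpose B = B"
    and ws: "(A + B) *v ws = A *v u"
  shows residual_completing_square: "A *v (w - u) + B *v w = (A + B) *v (w - ws)"
    and quadratic_completing_square: "(w - u) \<bullet> (A *v (w - u)) + w \<bullet> (B *v w)
      = (w - ws) \<bullet> ((A + B) *v (w - ws)) + (u - ws) \<bullet> (A *v u)"
proof -
  show "A *v (w - u) + B *v w = (A + B) *v (w - ws)"
    using ws
    by (simp add: matrix_vector_mult_diff_distrib matrix_vector_mult_add_rdistrib algebra_simps)
  have symK: "transpose (A + B) = A + B"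
    using symA symB by (simp add: transpose_def vec_eq_iff)
  have "u \<bullet> (A *v w) = w \<bullet> (A *v u)" "ws \<bullet> ((A + B) *v w) = w \<bullet> (A *v u)"
    using inner_matrix_vector_symmetric[OF symA] inner_matrix_vector_symmetric[OF symK] ws by metis+
  then show "(w - u) \<bullet> (A *v (w - u)) + w \<bullet> (B *v w)
      = (w - ws) \<bullet> ((A + B) *v (w - ws)) + (u - ws) \<bullet> (A *v u)"
    using ws by (simp add: matrix_vector_mult_diff_distrib matrix_vector_mult_add_rdistrib
        inner_diff_left inner_diff_right inner_add_right)
qed

text \<open>The right-hand side is twice the expected loss at \<open>w\<^sub>* = (A + B)\<^sup>-\<^sup>1 A u\<close>.\<close>

lemma trace_noise_floor:
  fixes A B :: "real^'n::finite^'n"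
  assumes symA: "transpose A = A" and invK: "invertible (A + B)"
  shows "trace (A ** matrix_inv (A + B) ** B ** outer u u)
    = (u - matrix_inv (A + B) *v (A *v u)) \<bullet> (A *v u)"
proof -
  have "(A ** matrix_inv (A + B) ** B) *v u = A *v (matrix_inv (A + B) *v ((A + B) *v u - A *v u))"
    by (simp add: matrix_vector_mul_assoc[symmetric] matrix_vector_mult_add_rdistrib)
  also have "\<dots> = A *v (u - matrix_inv (A + B) *v (A *v u))"
    by (simp add: matrix_vector_mult_diff_distrib matrix_vector_mul_assoc
        matrix_inv_mul_matrix[OF invK])
  finally show ?thesis
    by (simp add: trace_mult_outer inner_matrix_vector_symmetric[OF symA])
qed

lemma noise_cov_gaussian_centered:
  fixes A B :: "real^'n::finite^'n" and u :: "real^'n" and Dx Deta :: "(real^'n) measure"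
  assumes symA: "transpose A = A" and symB: "transpose B = B" and invK: "invertible (A + B)"
    and gx: "gaussian_law Dx A" and geta: "gaussian_law Deta B"
  defines "K \<equiv> A + B" and "ws \<equiv> matrix_inv (A + B) *v (A *v u)"
  shows "noise_cov S (Dx \<Otimes>\<^sub>M Deta) u w = (1 / real S) *\<^sub>R
    (K ** outer (w - ws) (w - ws) ** K + trace (K ** outer (w - ws) (w - ws)) *\<^sub>R K
      + trace (A ** matrix_inv K ** B ** outer u u) *\<^sub>R K)"
proof -
  have ws: "(A + B) *v ws = A *v u"
    by (simp add: ws_def matrix_vector_mul_assoc matrix_mul_assoc matrix_mul_matrix_inv[OF invK])
  have symK: "transpose K = K"
    using symA symB by (simp add: K_def transpose_def vec_eq_iff)
  have "outer (A *v (w - u) + B *v w) (A *v (w - u) + B *v w) = K ** outer (w - ws) (w - ws) ** K"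
    unfolding residual_completing_square[OF symA symB ws] K_def[symmetric]
      outer_matrix_vector_mult symK ..
  moreover have "(w - u) \<bullet> (A *v (w - u)) + w \<bullet> (B *v w)
      = trace (K ** outer (w - ws) (w - ws)) + trace (A ** matrix_inv K ** B ** outer u u)"
    unfolding quadratic_completing_square[OF symA symB ws] K_def trace_noise_floor[OF symA invK]
    by (simp add: trace_mult_outer ws_def)
  ultimately show ?thesis
    by (simp add: noise_cov_gaussian[OF gx geta] K_def[symmetric] algebra_simps)
qed

lemma bounded_linear_sandwich_plus_trace:
  "bounded_linear (\<lambda>X. K ** X ** K + trace (K ** X) *\<^sub>R (K :: real^'n::finite^'n))"
proof -
  have "linear (\<lambda>X. K ** X ** K + trace (K ** X) *\<^sub>R K)"
    by (rule linearI) (simp_all add: vec_eq_iff matrix_matrix_mult_def trace_def sum.distrib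
        sum_distrib_left sum_distrib_right algebra_simps)
  then show ?thesis
    by (simp add: linear_conv_bounded_linear)
qed

theorem proposition9:
  fixes A B :: "real^'n^'n" and u :: "real^'n" and S :: nat
    and Dx Deta :: "(real^'n) measure" and Mw :: "(real^'n) measure"
    and Sigma :: "real^'n^'n"
  assumes symA: "transpose A = A" and psdA: "\<forall>v. 0 \<le> v \<bullet> (A *v v)"
    and symB: "transpose B = B" and psdB: "\<forall>v. 0 \<le> v \<bullet> (B *v v)"
    and invK: "invertible (A + B)"
    and S: "S \<ge> 1"
    and gx: "gaussian_law Dx A" and geta: "gaussian_law Deta B"
    and Mw_prob: "prob_space Mw" and Mw_sets: "sets Mw = sets borel"
    and mean_int: "integrable Mw (\<lambda>w. w)"
    and mean: "(\<integral>w. w \<partial>Mw) = matrix_inv (A + B) *v (A *v u)"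
    and cov_int: "integrable Mw (\<lambda>w. outer (w - matrix_inv (A + B) *v (A *v u))
                                              (w - matrix_inv (A + B) *v (A *v u)))"
    and cov: "(\<integral>w. outer (w - matrix_inv (A + B) *v (A *v u))
                           (w - matrix_inv (A + B) *v (A *v u)) \<partial>Mw) = Sigma"
  shows "(\<integral>w. noise_cov S (Dx \<Otimes>\<^sub>M Deta) u w \<partial>Mw) =
     (1 / real S) *\<^sub>R
       ((A + B) ** Sigma ** (A + B)
        + trace ((A + B) ** Sigma) *\<^sub>R (A + B)
        + trace (A ** matrix_inv (A + B) ** B ** outer u u) *\<^sub>R (A + B))"
proof -
  interpret Mw: prob_space Mw by (rule Mw_prob)
  define K where "K = A + B"
  define ws where "ws = matrix_inv (A + B) *v (A *v u)"
  define F where "F X = K ** X ** K + trace (K ** X) *\<^sub>R K" for X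
  define c where "c = trace (A ** matrix_inv K ** B ** outer u u)"
  have noise: "noise_cov S (Dx \<Otimes>\<^sub>M Deta) u w
      = (1 / real S) *\<^sub>R (F (outer (w - ws) (w - ws)) + c *\<^sub>R K)" for w
    unfolding noise_cov_gaussian_centered[OF symA symB invK gx geta] F_def c_def K_def ws_def
    by (simp add: algebra_simps)
  have F: "bounded_linear F"
    unfolding F_def by (rule bounded_linear_sandwich_plus_trace)
  have "(\<integral>w. noise_cov S (Dx \<Otimes>\<^sub>M Deta) u w \<partial>Mw)
      = (1 / real S) *\<^sub>R (\<integral>w. F (outer (w - ws) (w - ws)) + c *\<^sub>R K \<partial>Mw)"
    unfolding noise by (rule integral_scaleR_right)
  also have "(\<integral>w. F (outer (w - ws) (w - ws)) + c *\<^sub>R K \<partial>Mw) = F Sigma + c *\<^sub>R K"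
    using integrable_bounded_linear[OF F cov_int] integral_bounded_linear[OF F cov_int]
    by (simp add: cov ws_def Mw.prob_space)
  finally show ?thesis
    by (simp add: F_def c_def K_def algebra_simps)
qed

end
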